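(* Let $M$ be a matroid of rank $r$ on a finite set $E$, and let $\mathcal H$ be the set of hyperplanes of $M$. Suppose that for each $H\in\mathcal H$ a set $U_H$ is given with $\mathrm{cl}_{r-2}(U_H)=H$. Let \[ \mathcal U=\{U_H : H\in\mathcal H,\ |U_H|\ge r\}. \] Then $M=M^{(r-1)}\uparrow\mathcal U$.
   Context: For a matroid $M$ with independent sets $\mathcal I$, its rank-$k$ truncation is $M^{(k)}=(E,\{I\in\mathcal I : |I|\le k\})$. For a matroid $N$ of rank $\rho$, $T(N)=N^{(\rho-1)}$; a matroid $N'$ is an erection of $N$ if $T(N')=N$ or $N'=N$. A set $X$ is $k$-closed in $M$ if $\mathrm{cl}_M(Y)\subseteq X$ for all $Y\subseteq X$ with $|Y|\le k$; $\mathrm{cl}_k(X)$ is the intersection of all $k$-closed sets containing $X$ (so $\mathrm{cl}_k(X)$ is the smallest $k$-closed superset of $X$). Knuth's procedure on input a matroid $N$ of rank $\rho$ on $E$ and $\mathcal U\subseteq 2^E$: initialise $\mathcal H\leftarrow\mathcal U\cup\{F\cup\{e\}: F \text{ a hyperplane of } N,\ e\notin F\}$; while there are distinct $H,H'\in\mathcal H$ with $r_N(H\cap H')=\rho$, replace them by $H\cup H'$. It is known (Knuth) that the output $\mathcal H(N,\mathcal U)$ does not depend on the choices made and is the set of rank-$\rho$ flats of an erection of $N$; $N\uparrow\mathcal U$ denotes this erection (it equals $N$ when $\mathcal H(N,\mathcal U)=\{E\}$, and otherwise has rank $\rho+1$). *)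

theory Defs
  imports Main
begin

text \<open>A matroid is represented as a pair (ground set E, family of independent sets).\<close>
type_synonym 'a matroid = "'a set \<times> 'a set set"

definition matroid :: "'a matroid \<Rightarrow> bool" where
  "matroid M \<longleftrightarrow> finite (fst M) \<and> {} \<in> snd M \<and> (\<forall>I\<in>snd M. I \<subseteq> fst M)
     \<and> (\<forall>I J. J \<in> snd M \<and> I \<subseteq> J \<longrightarrow> I \<in> snd M)
     \<and> (\<forall>I J. I \<in> snd M \<and> J \<in> snd M \<and> card I < card J \<longrightarrow> (\<exists>e\<in>J - I. insert e I \<in> snd M))"

definition rk :: "'a matroid \<Rightarrow> 'a set \<Rightarrow> nat" where
  "rk M X = Max (card ` {I \<in> snd M. I \<subseteq> X})"

definition mrank :: "'a matroid \<Rightarrow> nat" where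
  "mrank M = rk M (fst M)"

definition cl :: "'a matroid \<Rightarrow> 'a set \<Rightarrow> 'a set" where
  "cl M X = {e \<in> fst M. rk M (insert e X) = rk M X}"

definition flat :: "'a matroid \<Rightarrow> 'a set \<Rightarrow> bool" where
  "flat M F \<longleftrightarrow> F \<subseteq> fst M \<and> cl M F = F"

definition hyperplanes :: "'a matroid \<Rightarrow> 'a set set" where
  "hyperplanes M = {F. flat M F \<and> rk M F + 1 = mrank M}"

definition truncation :: "'a matroid \<Rightarrow> nat \<Rightarrow> 'a matroid" where
  "truncation M k = (fst M, {I \<in> snd M. card I \<le> k})"

definition trunc1 :: "'a matroid \<Rightarrow> 'a matroid" where
  "trunc1 N = truncation N (mrank N - 1)"

definition k_closed :: "'a matroid \<Rightarrow> nat \<Rightarrow> 'a set \<Rightarrow> bool" where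
  "k_closed M k X \<longleftrightarrow> (\<forall>Y. Y \<subseteq> X \<and> card Y \<le> k \<longrightarrow> cl M Y \<subseteq> X)"

definition clk :: "'a matroid \<Rightarrow> nat \<Rightarrow> 'a set \<Rightarrow> 'a set" where
  "clk M k X = \<Inter> {Z. X \<subseteq> Z \<and> Z \<subseteq> fst M \<and> k_closed M k Z}"

definition knuth_init :: "'a matroid \<Rightarrow> 'a set set \<Rightarrow> 'a set set" where
  "knuth_init N U = U \<union> {insert e F | F e. F \<in> hyperplanes N \<and> e \<in> fst N \<and> e \<notin> F}"

definition knuth_step :: "'a matroid \<Rightarrow> 'a set set \<Rightarrow> 'a set set \<Rightarrow> bool" where
  "knuth_step N HH HH' \<longleftrightarrow> (\<exists>H H'. H \<in> HH \<and> H' \<in> HH \<and> H \<noteq> H' \<and> rk N (H \<inter> H') = mrank N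
      \<and> HH' = (HH - {H, H'}) \<union> {H \<union> H'})"

definition knuth_terminal :: "'a matroid \<Rightarrow> 'a set set \<Rightarrow> bool" where
  "knuth_terminal N HH \<longleftrightarrow> \<not> (\<exists>H\<in>HH. \<exists>H'\<in>HH. H \<noteq> H' \<and> rk N (H \<inter> H') = mrank N)"

text \<open>The output H(N,U) (independent of choices by Knuth's theorem).\<close>
definition knuth_output :: "'a matroid \<Rightarrow> 'a set set \<Rightarrow> 'a set set" where
  "knuth_output N U = (THE HH. (knuth_step N)\<^sup>*\<^sup>* (knuth_init N U) HH \<and> knuth_terminal N HH)"

definition erect :: "'a matroid \<Rightarrow> 'a set set \<Rightarrow> 'a matroid" where
  "erect N U = (if knuth_output N U = {fst N} then N
     else (THE N'. matroid N' \<and> trunc1 N' = N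
             \<and> {F. flat N' F \<and> rk N' F = mrank N} = knuth_output N U))"

end

theory Submission
  imports Defs
begin

text \<open>
  Write r for the rank of M and N = M^(r-1). The hyperplanes of N are the rank-(r-2) flats
  of M, so every set in Knuth's initial family has M-rank r-1; and two sets whose intersection
  has N-rank r-1 both lie in the closure of that intersection, so their union again has M-rank
  r-1. In a final family every set X is (r-2)-closed: a set Y \<subseteq> X of size at most r-2
  extends inside X to an independent (r-1)-set J = I + e with Y \<subseteq> cl(I), and the final set
  containing cl(I) + e meets X in rank r-1, hence is X. Every U_H lies in a final set (directly
  if |U_H| \<ge> r, and via cl(U_H - u) + u when U_H is an independent (r-1)-set), which therefore
  contains cl_(r-2)(U_H) = H and, having rank r-1, equals H. So Knuth's procedure returns the
  hyperplanes of M, and a matroid is determined by its truncation together with its hyperplanes.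
\<close>

section \<open>Rank and closure\<close>

locale finite_matroid =
  fixes M :: "'a matroid"
  assumes matroid: "matroid M"
begin

lemma finite_ground: "finite (fst M)"
  using matroid by (simp add: matroid_def)

lemma empty_indep: "{} \<in> snd M"
  using matroid by (simp add: matroid_def)

lemma indep_subset_ground: "I \<in> snd M \<Longrightarrow> I \<subseteq> fst M"
  using matroid by (auto simp: matroid_def)

lemma indep_subset: "J \<in> snd M \<Longrightarrow> I \<subseteq> J \<Longrightarrow> I \<in> snd M"
  using matroid unfolding matroid_def by blast

lemma indep_augment:
  "I \<in> snd M \<Longrightarrow> J \<in> snd M \<Longrightarrow> card I < card J \<Longrightarrow> \<exists>e\<in>J - I. insert e I \<in> snd M"
  using matroid unfolding matroid_def by blast

lemma indep_finite: "I \<in> snd M \<Longrightarrow> finite I"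
  using finite_subset[OF indep_subset_ground finite_ground] .

lemma finite_indep_subsets: "finite {I \<in> snd M. I \<subseteq> X}"
  by (rule finite_subset[of _ "Pow (fst M)"]) (auto dest: indep_subset_ground simp: finite_ground)

lemma card_le_rk: "J \<in> snd M \<Longrightarrow> J \<subseteq> X \<Longrightarrow> card J \<le> rk M X"
  unfolding rk_def by (rule Max_ge) (use finite_indep_subsets in auto)

lemma obtain_rk_basis:
  obtains B where "B \<in> snd M" "B \<subseteq> X" "card B = rk M X"
proof -
  have "rk M X \<in> card ` {I \<in> snd M. I \<subseteq> X}"
    unfolding rk_def by (rule Max_in) (use finite_indep_subsets empty_indep in auto)
  then show ?thesis using that by auto
qed

lemma indep_extend_to_rk_basis:
  "I \<in> snd M \<Longrightarrow> I \<subseteq> X \<Longrightarrow> \<exists>J. I \<subseteq> J \<and> J \<subseteq> X \<and> J \<in> snd M \<and> card J = rk M X"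
proof (induction "rk M X - card I" arbitrary: I rule: less_induct)
  case less
  show ?case
  proof (cases "card I < rk M X")
    case True
    obtain B where B: "B \<in> snd M" "B \<subseteq> X" "card B = rk M X" by (rule obtain_rk_basis)
    then obtain e where e: "e \<in> B - I" "insert e I \<in> snd M"
      using indep_augment[OF less.prems(1) B(1)] True by auto
    have lt: "rk M X - card (insert e I) < rk M X - card I"
      using True e indep_finite[OF less.prems(1)] by simp
    have "insert e I \<subseteq> X" using e B less.prems by auto
    then obtain J where "insert e I \<subseteq> J" "J \<subseteq> X" "J \<in> snd M" "card J = rk M X"
      using less.hyps[OF lt e(2)] by auto
    then show ?thesis by (intro exI[of _ J]) auto
  next
    case False
    then show ?thesis using card_le_rk[OF less.prems] less.prems by (intro exI[of _ I]) auto
  qed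
qed

lemma rk_mono: "X \<subseteq> Y \<Longrightarrow> rk M X \<le> rk M Y"
proof (rule obtain_rk_basis[of X])
  fix B assume "X \<subseteq> Y" "B \<in> snd M" "B \<subseteq> X" "card B = rk M X"
  then show "rk M X \<le> rk M Y" using card_le_rk[of B Y] by simp
qed

lemma rk_le_card: "finite X \<Longrightarrow> rk M X \<le> card X"
  by (rule obtain_rk_basis[of X]) (auto dest: card_mono)

lemma rk_indep: "I \<in> snd M \<Longrightarrow> rk M I = card I"
  using card_le_rk rk_le_card indep_finite by (simp add: antisym)

lemma indep_if_rk_eq_card:
  assumes "finite X" "rk M X = card X"
  shows "X \<in> snd M"
proof -
  obtain B where B: "B \<in> snd M" "B \<subseteq> X" "card B = rk M X" by (rule obtain_rk_basis)
  with assms have "B = X" using card_subset_eq by metis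
  with B show ?thesis by simp
qed

lemma rk_insert_le: "rk M (insert e X) \<le> Suc (rk M X)"
proof -
  obtain B where B: "B \<in> snd M" "B \<subseteq> insert e X" "card B = rk M (insert e X)"
    by (rule obtain_rk_basis)
  have "card (B - {e}) \<le> rk M X"
    using B by (intro card_le_rk indep_subset[OF B(1)]) auto
  moreover have "card B \<le> Suc (card (B - {e}))"
    using indep_finite[OF B(1)] by (cases "e \<in> B") (auto simp: card_Suc_Diff1)
  ultimately show ?thesis using B by simp
qed

lemma indep_card_le_mrank: "I \<in> snd M \<Longrightarrow> card I \<le> mrank M"
  unfolding mrank_def using indep_subset_ground card_le_rk by blast

lemma cl_subset_ground: "cl M X \<subseteq> fst M"
  by (auto simp: cl_def)

lemma subset_cl: "X \<subseteq> fst M \<Longrightarrow> X \<subseteq> cl M X"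
  by (auto simp: cl_def insert_absorb)

lemma subset_cl_if_rk_le:
  assumes "Z \<subseteq> X" "X \<subseteq> fst M" "rk M X \<le> rk M Z"
  shows "X \<subseteq> cl M Z"
proof
  fix x assume "x \<in> X"
  with assms have "rk M (insert x Z) \<le> rk M Z" using rk_mono[of "insert x Z" X] by auto
  moreover have "rk M Z \<le> rk M (insert x Z)" by (rule rk_mono) auto
  ultimately show "x \<in> cl M Z" using \<open>x \<in> X\<close> assms by (auto simp: cl_def)
qed

lemma rk_insert_eq_Suc:
  assumes "e \<in> fst M" "e \<notin> cl M X"
  shows "rk M (insert e X) = Suc (rk M X)"
  using assms rk_insert_le[of e X] rk_mono[OF subset_insertI, of X e] by (auto simp: cl_def)

lemma indep_insert_if_not_mem_cl:
  assumes "I \<in> snd M" "I \<subseteq> X" "e \<in> fst M" "e \<notin> cl M X"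
  shows "insert e I \<in> snd M"
proof -
  obtain J where J: "I \<subseteq> J" "J \<subseteq> X" "J \<in> snd M" "card J = rk M X"
    using indep_extend_to_rk_basis[OF assms(1,2)] by blast
  obtain J' where J': "J \<subseteq> J'" "J' \<subseteq> insert e X" "J' \<in> snd M"
      "card J' = rk M (insert e X)"
    using indep_extend_to_rk_basis[OF J(3), of "insert e X"] J(2) by auto
  have "e \<in> J'"
  proof (rule ccontr)
    assume "e \<notin> J'"
    then have "card J' \<le> rk M X" using J' by (intro card_le_rk) auto
    then show False using J' rk_insert_eq_Suc[OF assms(3,4)] by simp
  qed
  with J J' have "insert e I \<subseteq> J'" by blast
  then show ?thesis by (rule indep_subset[OF J'(3)])
qed

lemma not_mem_cl_if_indep_insert:
  assumes "insert e I \<in> snd M" "e \<notin> I"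
  shows "e \<notin> cl M I"
proof
  assume "e \<in> cl M I"
  then have "rk M (insert e I) = rk M I" by (simp add: cl_def)
  then show False
    using assms rk_indep indep_subset[OF assms(1)] indep_finite[OF assms(1)] by fastforce
qed

lemma cl_mono:
  assumes "Y \<subseteq> X"
  shows "cl M Y \<subseteq> cl M X"
proof
  fix e assume e: "e \<in> cl M Y"
  then have eE: "e \<in> fst M" and rkY: "rk M (insert e Y) = rk M Y" by (auto simp: cl_def)
  show "e \<in> cl M X"
  proof (rule ccontr)
    assume nX: "e \<notin> cl M X"
    then have "e \<notin> X" using eE by (auto simp: cl_def insert_absorb)
    obtain B where B: "B \<in> snd M" "B \<subseteq> Y" "card B = rk M Y" by (rule obtain_rk_basis)
    have "insert e B \<in> snd M"
      using indep_insert_if_not_mem_cl[OF B(1) _ eE nX] B(2) assms by blast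
    then have "card (insert e B) \<le> rk M (insert e Y)" using B(2) by (intro card_le_rk) auto
    moreover have "e \<notin> B" using B(2) assms \<open>e \<notin> X\<close> by blast
    then have "card (insert e B) = Suc (rk M Y)" using B indep_finite[OF B(1)] by simp
    ultimately show False using rkY by simp
  qed
qed

lemma rk_cl:
  assumes "X \<subseteq> fst M"
  shows "rk M (cl M X) = rk M X"
proof (rule antisym[OF _ rk_mono[OF subset_cl[OF assms]]], rule ccontr)
  assume "\<not> rk M (cl M X) \<le> rk M X"
  obtain B where B: "B \<in> snd M" "B \<subseteq> X" "card B = rk M X" by (rule obtain_rk_basis)
  obtain J where J: "J \<in> snd M" "J \<subseteq> cl M X" "card J = rk M (cl M X)" by (rule obtain_rk_basis)
  obtain e where e: "e \<in> J - B" "insert e B \<in> snd M"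
    using indep_augment[OF B(1) J(1)] B J \<open>\<not> _\<close> by auto
  have "rk M (insert e X) = rk M X" using e J by (auto simp: cl_def)
  moreover have "card (insert e B) \<le> rk M (insert e X)"
    using e B by (intro card_le_rk) auto
  ultimately show False using B e indep_finite by simp
qed

lemma cl_idem:
  assumes "X \<subseteq> fst M"
  shows "cl M (cl M X) = cl M X"
proof
  show "cl M X \<subseteq> cl M (cl M X)" by (rule subset_cl[OF cl_subset_ground])
  have "X \<subseteq> cl M (cl M X)" using subset_cl[OF assms] subset_cl[OF cl_subset_ground] by blast
  moreover have "rk M (cl M (cl M X)) = rk M X" using rk_cl cl_subset_ground assms by simp
  ultimately show "cl M (cl M X) \<subseteq> cl M X"
    using subset_cl_if_rk_le[of X "cl M (cl M X)"] cl_subset_ground by simp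
qed

lemma flat_cl: "X \<subseteq> fst M \<Longrightarrow> flat M (cl M X)"
  by (simp add: flat_def cl_subset_ground cl_idem)

lemma cl_subset_flat: "Y \<subseteq> F \<Longrightarrow> flat M F \<Longrightarrow> cl M Y \<subseteq> F"
  using cl_mono unfolding flat_def by blast

lemma rk_Un_eq_if_rk_Int_ge:
  assumes "X \<subseteq> fst M" "X' \<subseteq> fst M" "rk M X = k" "rk M X' = k" "k \<le> rk M (X \<inter> X')"
  shows "rk M (X \<union> X') = k"
proof -
  have "X \<union> X' \<subseteq> cl M (X \<inter> X')"
    using assms rk_mono[of "X \<inter> X'"] by (intro Un_least subset_cl_if_rk_le) auto
  then have "rk M (X \<union> X') \<le> rk M (X \<inter> X')"
    using rk_mono rk_cl assms(1) by (metis inf.coboundedI1)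
  also have "\<dots> \<le> k" using rk_mono[of "X \<inter> X'" X] assms(3) by simp
  finally show ?thesis using rk_mono[of X "X \<union> X'"] assms(3) by simp
qed

lemma cl_mem_hyperplanes: "X \<subseteq> fst M \<Longrightarrow> rk M X + 1 = mrank M \<Longrightarrow> cl M X \<in> hyperplanes M"
  by (simp add: hyperplanes_def flat_cl rk_cl)

lemma indep_iff_card_eq_mrank:
  assumes "1 \<le> mrank M" "card I = mrank M" "I \<subseteq> fst M"
  shows "I \<in> snd M \<longleftrightarrow> (\<exists>b\<in>I. I - {b} \<in> snd M) \<and> (\<forall>H\<in>hyperplanes M. \<not> I \<subseteq> H)"
proof
  assume I: "I \<in> snd M"
  from assms obtain b where "b \<in> I" by fastforce
  then have "\<exists>b\<in>I. I - {b} \<in> snd M" using indep_subset[OF I] by blast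
  moreover have "\<not> I \<subseteq> H" if "H \<in> hyperplanes M" for H
    using card_le_rk[OF I, of H] that assms by (auto simp: hyperplanes_def)
  ultimately show "(\<exists>b\<in>I. I - {b} \<in> snd M) \<and> (\<forall>H\<in>hyperplanes M. \<not> I \<subseteq> H)" by blast
next
  assume "(\<exists>b\<in>I. I - {b} \<in> snd M) \<and> (\<forall>H\<in>hyperplanes M. \<not> I \<subseteq> H)"
  then obtain b where b: "b \<in> I" "I - {b} \<in> snd M" and nH: "\<forall>H\<in>hyperplanes M. \<not> I \<subseteq> H"
    by blast
  have fI: "finite I" using assms(3) finite_ground finite_subset by blast
  show "I \<in> snd M"
  proof (rule ccontr)
    assume "I \<notin> snd M"
    then have "rk M I \<noteq> card I" using indep_if_rk_eq_card fI by blast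
    moreover have "card I - 1 \<le> rk M I" using card_le_rk[OF b(2)] b fI by auto
    ultimately have "rk M I + 1 = mrank M" using rk_le_card[OF fI] assms(1,2) by linarith
    then have "cl M I \<in> hyperplanes M" by (rule cl_mem_hyperplanes[OF assms(3)])
    then show False using nH subset_cl[OF assms(3)] by blast
  qed
qed

section \<open>Truncation and k-closure\<close>

lemma fst_truncation: "fst (truncation M k) = fst M"
  by (simp add: truncation_def)

lemma snd_truncation: "snd (truncation M k) = {I \<in> snd M. card I \<le> k}"
  by (simp add: truncation_def)

lemma matroid_truncation: "matroid (truncation M k)"
proof -
  let ?T = "{I \<in> snd M. card I \<le> k}"
  have subset_closed: "I \<in> ?T" if "J \<in> ?T" "I \<subseteq> J" for I J
    using that indep_subset[of J I] card_mono[OF indep_finite, of J I] by simp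
  have augment: "\<exists>e\<in>J - I. insert e I \<in> ?T"
    if IJ: "I \<in> ?T" "J \<in> ?T" "card I < card J" for I J
  proof -
    obtain e where e: "e \<in> J - I" "insert e I \<in> snd M"
      using indep_augment[of I J] IJ by auto
    then have "card (insert e I) \<le> k" using IJ indep_finite[of I] by simp
    with e show ?thesis by blast
  qed
  have "{} \<in> ?T" "\<forall>I\<in>?T. I \<subseteq> fst M"
    using empty_indep indep_subset_ground by auto
  with subset_closed augment finite_ground show ?thesis
    unfolding matroid_def fst_truncation snd_truncation by blast
qed

lemma rk_truncation: "rk (truncation M k) X = min (rk M X) k"
proof (rule antisym)
  interpret T: finite_matroid "truncation M k" by (rule finite_matroid.intro[OF matroid_truncation])
  obtain B where B: "B \<in> snd (truncation M k)" "B \<subseteq> X" "card B = rk (truncation M k) X"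
    by (rule T.obtain_rk_basis)
  then have "B \<in> snd M" "card B \<le> k" by (auto simp: snd_truncation)
  then show "rk (truncation M k) X \<le> min (rk M X) k"
    using card_le_rk[OF _ B(2)] B(3) by fastforce
  obtain C where C: "C \<in> snd M" "C \<subseteq> X" "card C = rk M X" by (rule obtain_rk_basis)
  obtain C' where C': "C' \<subseteq> C" "card C' = min (rk M X) k"
    by (rule obtain_subset_with_card_n[of "min (rk M X) k" C]) (use C in auto)
  then have "C' \<in> snd (truncation M k)" using indep_subset[OF C(1)] by (auto simp: snd_truncation)
  then show "min (rk M X) k \<le> rk (truncation M k) X" using T.card_le_rk C C' by fastforce
qed

lemma mrank_truncation: "mrank (truncation M k) = min (mrank M) k"
  unfolding mrank_def fst_truncation rk_truncation ..

lemma flat_k_closed: "flat M F \<Longrightarrow> k_closed M k F"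
  using cl_subset_flat by (auto simp: k_closed_def)

lemma clk_subset_cl: "X \<subseteq> fst M \<Longrightarrow> clk M k X \<subseteq> cl M X"
  using subset_cl flat_cl flat_k_closed cl_subset_ground by (auto simp: clk_def)

end

lemma subset_clk: "X \<subseteq> clk M k X"
  by (auto simp: clk_def)

lemma clk_least: "X \<subseteq> Z \<Longrightarrow> Z \<subseteq> fst M \<Longrightarrow> k_closed M k Z \<Longrightarrow> clk M k X \<subseteq> Z"
  unfolding clk_def by blast

section \<open>Knuth's procedure and erections\<close>

lemma hyperplanes_eq: "1 \<le> mrank M \<Longrightarrow> hyperplanes M = {F. flat M F \<and> rk M F = mrank M - 1}"
  by (auto simp: hyperplanes_def)

lemma knuth_step_card_less:
  assumes "finite HH" "knuth_step N HH HH'"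
  shows "finite HH' \<and> card HH' < card HH"
proof -
  obtain X X' where XX: "X \<in> HH" "X' \<in> HH" "X \<noteq> X'" "HH' = insert (X \<union> X') (HH - {X, X'})"
    using assms(2) unfolding knuth_step_def by blast
  have "card (HH - {X, X'}) = card HH - 2" using XX assms(1) by (simp add: card_Diff_subset)
  moreover have "2 \<le> card HH" using card_mono[OF assms(1), of "{X, X'}"] XX by simp
  moreover have "card HH' \<le> Suc (card (HH - {X, X'}))"
    using XX(4) assms(1) by (simp add: card_insert_if)
  ultimately show ?thesis using XX(4) assms(1) by simp
qed

lemma knuth_terminal_reachable:
  "finite HH \<Longrightarrow> \<exists>HH'. (knuth_step N)\<^sup>*\<^sup>* HH HH' \<and> knuth_terminal N HH'"
proof (induction "card HH" arbitrary: HH rule: less_induct)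
  case less
  show ?case
  proof (cases "knuth_terminal N HH")
    case False
    then obtain HH2 where step: "knuth_step N HH HH2"
      unfolding knuth_terminal_def knuth_step_def by blast
    with less.prems have "finite HH2" "card HH2 < card HH" using knuth_step_card_less by blast+
    then obtain T where "(knuth_step N)\<^sup>*\<^sup>* HH2 T" "knuth_terminal N T" using less.hyps by blast
    then show ?thesis using converse_rtranclp_into_rtranclp[of "knuth_step N", OF step] by blast
  qed blast
qed

lemma mrank_eq_if_trunc1_eq:
  assumes "matroid M" "matroid M'" "2 \<le> mrank M" "trunc1 M' = trunc1 M"
  shows "mrank M' = mrank M"
proof -
  interpret M: finite_matroid M by (rule finite_matroid.intro) fact
  interpret M': finite_matroid M' by (rule finite_matroid.intro) fact
  have "mrank M' - 1 = mrank M - 1"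
    using arg_cong[OF assms(4), of mrank] by (simp add: trunc1_def M.mrank_truncation M'.mrank_truncation)
  with assms(3) show ?thesis by linarith
qed

lemma matroid_eqI_trunc1_hyperplanes:
  fixes M M' :: "'a matroid"
  assumes "matroid M" "matroid M'" "1 \<le> mrank M" "mrank M' = mrank M"
    and "trunc1 M' = trunc1 M" "hyperplanes M' = hyperplanes M"
  shows "M' = M"
proof -
  interpret M: finite_matroid M by (rule finite_matroid.intro) fact
  interpret M': finite_matroid M' by (rule finite_matroid.intro) fact
  let ?r = "mrank M"
  have ground: "fst M' = fst M"
    using arg_cong[OF assms(5), of fst] by (simp add: trunc1_def truncation_def)
  have small: "I \<in> snd M' \<longleftrightarrow> I \<in> snd M" if "card I < ?r" for I
  proof -
    have "{I \<in> snd M'. card I \<le> ?r - 1} = {I \<in> snd M. card I \<le> ?r - 1}"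
      using arg_cong[OF assms(5), of snd] assms(4) by (simp add: trunc1_def truncation_def)
    then have "I \<in> snd M' \<and> card I \<le> ?r - 1 \<longleftrightarrow> I \<in> snd M \<and> card I \<le> ?r - 1"
      by (simp add: set_eq_iff)
    then show ?thesis using that by auto
  qed
  have "snd M' = snd M"
  proof (rule set_eqI)
    fix I :: "'a set"
    consider "card I < ?r" | "card I > ?r" | "card I = ?r" by linarith
    then show "I \<in> snd M' \<longleftrightarrow> I \<in> snd M"
    proof cases
      case 1
      then show ?thesis by (rule small)
    next
      case 2
      then have "I \<notin> snd M" "I \<notin> snd M'"
        using M.indep_card_le_mrank[of I] M'.indep_card_le_mrank[of I] assms(4) by auto
      then show ?thesis by simp
    next
      case 3
      show ?thesis
      proof (cases "I \<subseteq> fst M")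
        case False
        then show ?thesis using M.indep_subset_ground M'.indep_subset_ground ground by blast
      next
        case True
        have "finite I" using True M.finite_ground finite_subset by blast
        then have "I - {b} \<in> snd M' \<longleftrightarrow> I - {b} \<in> snd M" if "b \<in> I" for b
          using small[of "I - {b}"] that 3 assms(3) by simp
        then have "(\<exists>b\<in>I. I - {b} \<in> snd M') \<longleftrightarrow> (\<exists>b\<in>I. I - {b} \<in> snd M)" by blast
        moreover have "I \<in> snd M' \<longleftrightarrow> (\<exists>b\<in>I. I - {b} \<in> snd M') \<and> (\<forall>H\<in>hyperplanes M. \<not> I \<subseteq> H)"
          using M'.indep_iff_card_eq_mrank[of I] assms(3,4,6) 3 True ground by simp
        ultimately show ?thesis using M.indep_iff_card_eq_mrank[OF assms(3) 3 True] by simp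
      qed
    qed
  qed
  with ground show ?thesis by (simp add: prod_eq_iff)
qed

lemma erect_trunc1_eqI:
  assumes "matroid M" "2 \<le> mrank M" "knuth_output (trunc1 M) U = hyperplanes M"
  shows "erect (trunc1 M) U = M"
proof -
  interpret finite_matroid M by (rule finite_matroid.intro) fact
  have rank: "mrank (trunc1 M) = mrank M - 1" by (simp add: trunc1_def mrank_truncation)
  have "fst M \<notin> hyperplanes M" by (simp add: hyperplanes_def mrank_def)
  then have "knuth_output (trunc1 M) U \<noteq> {fst (trunc1 M)}"
    using assms(3) by (auto simp: trunc1_def fst_truncation)
  then have "erect (trunc1 M) U = (THE M'. matroid M' \<and> trunc1 M' = trunc1 M
      \<and> {F. flat M' F \<and> rk M' F = mrank M - 1} = hyperplanes M)"
    unfolding erect_def assms(3) rank by simp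
  also have "\<dots> = M"
  proof (rule the_equality)
    show "matroid M \<and> trunc1 M = trunc1 M \<and> {F. flat M F \<and> rk M F = mrank M - 1} = hyperplanes M"
      using assms(1,2) hyperplanes_eq[of M] by simp
  next
    fix M' assume M': "matroid M' \<and> trunc1 M' = trunc1 M
      \<and> {F. flat M' F \<and> rk M' F = mrank M - 1} = hyperplanes M"
    then have rank': "mrank M' = mrank M" using mrank_eq_if_trunc1_eq assms(1,2) by blast
    then have "hyperplanes M' = hyperplanes M" using M' assms(2) hyperplanes_eq[of M'] by simp
    with M' rank' assms(1,2) show "M' = M"
      using matroid_eqI_trunc1_hyperplanes[of M M'] by simp
  qed
  finally show ?thesis .
qed

section \<open>Knuth's procedure on the truncation\<close>

locale spanned_hyperplanes = finite_matroid M for M :: "'a matroid" +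
  fixes UH :: "'a set \<Rightarrow> 'a set"
  assumes two_le_mrank: "2 \<le> mrank M"
    and clk_UH: "H \<in> hyperplanes M \<Longrightarrow> clk M (mrank M - 2) (UH H) = H"
begin

abbreviation E :: "'a set" where "E \<equiv> fst M"
abbreviation r :: nat where "r \<equiv> mrank M"
abbreviation N :: "'a matroid" where "N \<equiv> trunc1 M"
abbreviation UU :: "'a set set" where "UU \<equiv> {UH H | H. H \<in> hyperplanes M \<and> card (UH H) \<ge> r}"

lemma fst_N: "fst N = E"
  by (simp add: trunc1_def fst_truncation)

lemma rk_N: "rk N X = min (rk M X) (r - 1)"
  by (simp add: trunc1_def rk_truncation)

lemma mrank_N: "mrank N = r - 1"
  by (simp add: trunc1_def mrank_truncation)

lemma rk_N_eq_mrank_N_iff: "rk N X = mrank N \<longleftrightarrow> r - 1 \<le> rk M X"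
  by (auto simp: rk_N mrank_N)

lemma cl_N:
  assumes "rk M F \<le> r - 2"
  shows "cl N F = cl M F"
proof -
  have "rk N (insert e F) = rk M (insert e F)" for e
    using rk_insert_le[of e F] assms two_le_mrank by (simp add: rk_N)
  moreover have "rk N F = rk M F" using assms by (simp add: rk_N)
  ultimately show ?thesis by (simp add: cl_def fst_N)
qed

lemma hyperplanes_N_iff: "F \<in> hyperplanes N \<longleftrightarrow> flat M F \<and> rk M F = r - 2"
proof -
  have "rk N F + 1 = mrank N \<longleftrightarrow> rk M F = r - 2"
    using two_le_mrank by (auto simp: rk_N mrank_N min_def)
  moreover have "flat N F \<longleftrightarrow> flat M F" if "rk M F = r - 2"
    using cl_N that by (simp add: flat_def fst_N)
  ultimately show ?thesis by (auto simp: hyperplanes_def)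
qed

lemma UH_subset: "H \<in> hyperplanes M \<Longrightarrow> UH H \<subseteq> H"
  using subset_clk[of "UH H" M "r - 2"] clk_UH by simp

lemma rk_UH:
  assumes "H \<in> hyperplanes M"
  shows "rk M (UH H) = r - 1"
proof -
  have H: "H \<subseteq> E" "rk M H = r - 1"
    using assms two_le_mrank by (auto simp: hyperplanes_def flat_def)
  then have U: "UH H \<subseteq> E" using UH_subset[OF assms] by blast
  have "H \<subseteq> cl M (UH H)" using clk_subset_cl[OF U, of "r - 2"] clk_UH[OF assms] by simp
  then have "rk M H \<le> rk M (UH H)" using rk_mono rk_cl[OF U] by metis
  moreover have "rk M (UH H) \<le> rk M H" using rk_mono UH_subset[OF assms] by blast
  ultimately show ?thesis using H by simp
qed

lemma knuth_init_N_eq: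
  "knuth_init N UU = UU \<union> {insert e F | F e. F \<in> hyperplanes N \<and> e \<in> E \<and> e \<notin> F}"
  by (simp add: knuth_init_def fst_N)

lemma knuth_init_rk:
  assumes "Y \<in> knuth_init N UU"
  shows "Y \<subseteq> E \<and> rk M Y = r - 1"
proof (cases "Y \<in> UU")
  case True
  then obtain H where "Y = UH H" "H \<in> hyperplanes M" by blast
  then show ?thesis using UH_subset rk_UH by (auto simp: hyperplanes_def flat_def)
next
  case False
  then obtain F e where "Y = insert e F" "flat M F" "rk M F = r - 2" "e \<in> E" "e \<notin> F"
    using assms unfolding knuth_init_N_eq hyperplanes_N_iff by blast
  then show ?thesis using rk_insert_eq_Suc[of e F] two_le_mrank by (auto simp: flat_def)
qed

lemma insert_cl_mem_knuth_init:
  assumes "J \<in> snd M" "card J = r - 1" "e \<in> J"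
  shows "insert e (cl M (J - {e})) \<in> knuth_init N UU"
proof -
  have I: "J - {e} \<in> snd M" "J - {e} \<subseteq> E"
    using indep_subset[OF assms(1)] indep_subset_ground[OF assms(1)] by auto
  have "card (J - {e}) = r - 2" using assms indep_finite by simp
  then have "cl M (J - {e}) \<in> hyperplanes N"
    unfolding hyperplanes_N_iff using flat_cl[OF I(2)] rk_cl[OF I(2)] rk_indep[OF I(1)] by simp
  moreover have "e \<notin> cl M (J - {e})"
    using not_mem_cl_if_indep_insert[of e "J - {e}"] assms by (simp add: insert_absorb)
  moreover have "e \<in> E" using assms indep_subset_ground by blast
  ultimately show ?thesis unfolding knuth_init_N_eq by blast
qed

definition knuth_invariant :: "'a set set \<Rightarrow> bool" where
  "knuth_invariant HH \<longleftrightarrow>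
     (\<forall>X\<in>HH. X \<subseteq> E \<and> rk M X = r - 1) \<and> (\<forall>Y\<in>knuth_init N UU. \<exists>X\<in>HH. Y \<subseteq> X)"

lemma knuth_invariant_init: "knuth_invariant (knuth_init N UU)"
  using knuth_init_rk by (auto simp: knuth_invariant_def)

lemma knuth_invariant_step:
  assumes "knuth_invariant HH" "knuth_step N HH HH'"
  shows "knuth_invariant HH'"
proof -
  obtain X X' where XX: "X \<in> HH" "X' \<in> HH" "r - 1 \<le> rk M (X \<inter> X')"
      "HH' = insert (X \<union> X') (HH - {X, X'})"
    using assms(2) unfolding knuth_step_def rk_N_eq_mrank_N_iff by blast
  have ranks: "\<forall>Z\<in>HH. Z \<subseteq> E \<and> rk M Z = r - 1" using assms(1) by (simp add: knuth_invariant_def)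
  then have "X \<union> X' \<subseteq> E \<and> rk M (X \<union> X') = r - 1"
    using XX rk_Un_eq_if_rk_Int_ge[of X X' "r - 1"] by auto
  with ranks have "\<forall>Z\<in>HH'. Z \<subseteq> E \<and> rk M Z = r - 1" using XX(4) by blast
  moreover have "\<exists>Z\<in>HH'. Y \<subseteq> Z" if "Y \<subseteq> W" "W \<in> HH" for Y W
    using that XX(4) by (cases "W \<in> {X, X'}") auto
  ultimately show ?thesis using assms(1) unfolding knuth_invariant_def by meson
qed

lemma knuth_terminal_eq:
  assumes "knuth_terminal N T" "X \<in> T" "X' \<in> T" "r - 1 \<le> rk M (X \<inter> X')"
  shows "X = X'"
  using assms unfolding knuth_terminal_def rk_N_eq_mrank_N_iff by blast

lemma knuth_invariant_covers_indep:
  assumes "knuth_invariant T" "J \<in> snd M" "card J = r - 1" "e \<in> J"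
  obtains X where "X \<in> T" "J \<subseteq> X" "cl M (J - {e}) \<subseteq> X"
proof -
  obtain X where "X \<in> T" "insert e (cl M (J - {e})) \<subseteq> X"
    using assms insert_cl_mem_knuth_init unfolding knuth_invariant_def by blast
  moreover have "J \<subseteq> insert e (cl M (J - {e}))"
    using subset_cl[of "J - {e}"] indep_subset_ground[OF assms(2)] by blast
  ultimately show ?thesis using that by blast
qed

lemma knuth_terminal_k_closed:
  assumes inv: "knuth_invariant T" and terminal: "knuth_terminal N T" and X: "X \<in> T"
  shows "k_closed M (r - 2) X"
  unfolding k_closed_def
proof (intro allI impI)
  fix Y assume Y: "Y \<subseteq> X \<and> card Y \<le> r - 2"
  have XE: "X \<subseteq> E" "rk M X = r - 1" using inv X unfolding knuth_invariant_def by auto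
  then have YE: "Y \<subseteq> E" "finite Y" using Y finite_subset[OF _ finite_ground] by auto
  obtain B where B: "B \<in> snd M" "B \<subseteq> Y" "card B = rk M Y" by (rule obtain_rk_basis)
  obtain J where J: "B \<subseteq> J" "J \<subseteq> X" "J \<in> snd M" "card J = r - 1"
    using indep_extend_to_rk_basis[of B X] B Y XE by auto
  have "card B < card J" using B J Y rk_le_card[OF YE(2)] two_le_mrank by linarith
  have "\<not> J \<subseteq> B"
  proof
    assume "J \<subseteq> B"
    then have "card J \<le> card B" by (rule card_mono[OF indep_finite[OF B(1)]])
    with \<open>card B < card J\<close> show False by simp
  qed
  then obtain e where e: "e \<in> J" "e \<notin> B" by blast
  obtain X' where X': "X' \<in> T" "J \<subseteq> X'" "cl M (J - {e}) \<subseteq> X'"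
    by (rule knuth_invariant_covers_indep[OF inv J(3,4) e(1)])
  have "r - 1 \<le> rk M (X \<inter> X')" using card_le_rk[OF J(3), of "X \<inter> X'"] J X' by auto
  then have "X' = X" using knuth_terminal_eq[OF terminal X X'(1)] by simp
  have "Y \<subseteq> cl M B" using subset_cl_if_rk_le[of B Y] B YE rk_indep by simp
  also have "\<dots> \<subseteq> cl M (J - {e})" using J(1) e(2) by (intro cl_mono) blast
  finally have "cl M Y \<subseteq> cl M (J - {e})"
    using indep_subset_ground[OF J(3)] by (intro cl_subset_flat flat_cl) auto
  with X' \<open>X' = X\<close> show "cl M Y \<subseteq> X" by blast
qed

lemma hyperplane_mem_knuth_terminal:
  assumes inv: "knuth_invariant T" and terminal: "knuth_terminal N T" and H: "H \<in> hyperplanes M"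
  shows "H \<in> T"
proof -
  have HE: "flat M H" "rk M H = r - 1" using H two_le_mrank by (auto simp: hyperplanes_def)
  obtain X where X: "X \<in> T" "UH H \<subseteq> X"
  proof (cases "r \<le> card (UH H)")
    case True
    then have "UH H \<in> knuth_init N UU" using H unfolding knuth_init_N_eq by blast
    then show ?thesis using inv that unfolding knuth_invariant_def by blast
  next
    case False
    have U: "UH H \<subseteq> E" "finite (UH H)"
      using UH_subset[OF H] HE finite_subset[OF _ finite_ground] by (auto simp: flat_def)
    then have card: "card (UH H) = r - 1" using rk_le_card[OF U(2)] rk_UH[OF H] False by linarith
    then have indep: "UH H \<in> snd M" using indep_if_rk_eq_card U rk_UH[OF H] by simp
    have "UH H \<noteq> {}" using card two_le_mrank by auto
    then obtain u where u: "u \<in> UH H" by blast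
    obtain X where "X \<in> T" "UH H \<subseteq> X"
      by (rule knuth_invariant_covers_indep[OF inv indep card u])
    then show ?thesis by (rule that)
  qed
  have XE: "X \<subseteq> E" "rk M X = r - 1" using inv X(1) unfolding knuth_invariant_def by auto
  have "H \<subseteq> X"
    using clk_least[OF X(2) XE(1) knuth_terminal_k_closed[OF inv terminal X(1)]] clk_UH[OF H] by simp
  moreover have "X \<subseteq> H"
    using subset_cl_if_rk_le[OF \<open>H \<subseteq> X\<close> XE(1)] XE HE by (simp add: flat_def)
  ultimately show ?thesis using X by auto
qed

lemma knuth_terminal_eq_hyperplanes:
  assumes inv: "knuth_invariant T" and terminal: "knuth_terminal N T"
  shows "T = hyperplanes M"
proof (intro subset_antisym subsetI)
  fix X assume X: "X \<in> T"
  then have XE: "X \<subseteq> E" "rk M X + 1 = r" using inv two_le_mrank unfolding knuth_invariant_def by auto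
  then have H: "cl M X \<in> hyperplanes M" by (rule cl_mem_hyperplanes)
  have "X = cl M X"
    using knuth_terminal_eq[OF terminal X hyperplane_mem_knuth_terminal[OF inv terminal H]]
      subset_cl[OF XE(1)] XE by (simp add: Int_absorb2)
  with H show "X \<in> hyperplanes M" by simp
qed (use hyperplane_mem_knuth_terminal[OF inv terminal] in blast)

lemma knuth_output_eq_hyperplanes: "knuth_output N UU = hyperplanes M"
proof -
  have reach_inv: "knuth_invariant HH" if "(knuth_step N)\<^sup>*\<^sup>* (knuth_init N UU) HH" for HH
    using that by (induction rule: rtranclp_induct) (auto intro: knuth_invariant_init knuth_invariant_step)
  have "knuth_init N UU \<subseteq> Pow E" using knuth_init_rk by blast
  then have "finite (knuth_init N UU)" using finite_ground finite_subset by blast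
  then obtain T where T: "(knuth_step N)\<^sup>*\<^sup>* (knuth_init N UU) T" "knuth_terminal N T"
    using knuth_terminal_reachable by blast
  show ?thesis unfolding knuth_output_def
    by (rule the_equality) (use T reach_inv knuth_terminal_eq_hyperplanes in blast)+
qed

end

theorem lemma4p1:
  fixes M :: "'a matroid" and UH :: "'a set \<Rightarrow> 'a set"
  assumes "matroid M"
    and "2 \<le> mrank M"
    and "\<forall>H\<in>hyperplanes M. clk M (mrank M - 2) (UH H) = H"
  shows "M = erect (truncation M (mrank M - 1))
                   {UH H | H. H \<in> hyperplanes M \<and> card (UH H) \<ge> mrank M}"
proof -
  interpret spanned_hyperplanes M UH
    using assms by unfold_locales (auto intro: finite_matroid.intro)
  have "erect (trunc1 M) UU = M"
    using erect_trunc1_eqI[OF assms(1,2) knuth_output_eq_hyperplanes] .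
  then show ?thesis by (simp add: trunc1_def)
qed

end
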